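(* Let $G$ and $H$ be graphs, $k \in \mathbb{N}$, and suppose that $\Phi$ is a level-$k$ quantum isomorphism map from $G$ to $H$. If $M$ is the Choi matrix of $\Phi$, then $M_{s,t} = 0$ for $s,t \in (V(G)\times V(H))^k$ whenever some cyclic permutation of the string $s^R t$ contains consecutive letters $gh$ and $g'h'$ (with $g,g' \in V(G)$, $h,h' \in V(H)$) such that $\mathrm{rel}_G(g,g') \neq \mathrm{rel}_H(h,h')$.
   Context: Graphs are finite, undirected, without multiple edges; $G,H$ are simple. For $g,g'\in V(G)$ and $h,h'\in V(H)$, $\mathrm{rel}_G(g,g')=\mathrm{rel}_H(h,h')$ means both pairs are adjacent, both are non-adjacent distinct, or both are equal. Let $\Sigma = V(G)\times V(H)$; a letter $(g,h)$ is written $gh$. For a string $s=s_1\cdots s_k$, $s^R = s_k\cdots s_1$ is its reversal, and $st$ denotes concatenation. A $(k,k)$-bilabelled graph is $\boldsymbol{F}=(F,\boldsymbol{u},\boldsymbol{v})$ with $\boldsymbol{u},\boldsymbol{v}\in V(F)^k$; its homomorphism tensor $\boldsymbol{F}_G\in\mathbb{C}^{V(G)^k\times V(G)^k}$ has $(\boldsymbol{x},\boldsymbol{y})$-entry equal to the number of homomorphisms $h:F\to G$ with $h(u_i)=x_i$, $h(v_i)=y_i$. Atomic graphs: $\mathcal{Q}_k^P$ is the set of $(k,k)$-bilabelled minors (obtained by edge contraction, edge deletion, deletion of unlabelled vertices) of $\boldsymbol{C}_k=(C_k,(1,\dots,k),(k+1,\dots,2k))$, where $V(C_k)=[2k]$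 and $E(C_k)=\{\{i,i+1\}: i\in[2k], i\neq k,2k\}\cup\{\{1,k+1\},\{k,2k\}\}$; $\mathcal{Q}_k^S$ is the set of bilabelled minors of $\boldsymbol{M}_k=(M_k,(1,\dots,k),(k+1,\dots,2k))$ with $V(M_k)=[2k]$, $E(M_k)=\{\{i,i+k\}:i\in[k]\}$; $\mathcal{Q}_k=\mathcal{Q}_k^P\cup\mathcal{Q}_k^S$. $I$ and $J$ denote the identity and all-ones matrices, $\odot$ the Schur (entrywise) product. For $\sigma$ a permutation of the $2k$ label positions, $X^\sigma$ denotes the matrix obtained by permuting the $2k$ index coordinates accordingly; $\mathscr{C}(1,\dots,k,2k,\dots,k+1)$ is the group of cyclic permutations of the cyclic order $1,\dots,k,2k,\dots,k+1$. A linear map $\Phi:\mathbb{C}^{V(G)^k\times V(G)^k}\to\mathbb{C}^{V(H)^k\times V(H)^k}$ is a level-$k$ quantum isomorphism map from $G$ to $H$ if: $\Phi$ is completely positive; $\Phi(\boldsymbol{F}_G\odot X)=\boldsymbol{F}_H\odot\Phi(X)$ for all $\boldsymbol{F}\in\mathcal{Q}_k^P$ and all $X$; $\Phi(I)=I=\Phi^*(I)$; $\Phi(J)=J=\Phi^*(J)$; $\Phi(\boldsymbol{F}_G)=\boldsymbol{F}_H$ for all $\boldsymbol{F}\in\mathcal{Q}_k$; and $\Phi(X^\sigma)=\Phi(X)^\sigma$ for all $\sigma\in\mathscr{C}(1,\dots,k,2k,\dots,k+1)$. The Choi matrix $M$ of $\Phi$ is indexed by $(V(G)\times V(H))^k$,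 with $M_{g_1h_1\cdots g_kh_k,\,g'_1h'_1\cdots g'_kh'_k}=\Phi(E^{g_1\cdots g_k,\,g'_1\cdots g'_k})_{h_1\cdots h_k,\,h'_1\cdots h'_k}$, where $E^{\boldsymbol{x},\boldsymbol{y}}$ is the matrix unit. *)

theory Defs
  imports Complex_Main "HOL-Library.FuncSet"
begin

text \<open>A (simple) graph on a finite vertex type: symmetric, irreflexive adjacency.
  The vertex set is UNIV of the finite type.\<close>
definition simple_graph :: "('a::finite \<Rightarrow> 'a \<Rightarrow> bool) \<Rightarrow> bool" where
  "simple_graph adj \<longleftrightarrow> (\<forall>x y. adj x y \<longrightarrow> adj y x) \<and> (\<forall>x. \<not> adj x x)"

definition rel :: "('a \<Rightarrow> 'a \<Rightarrow> bool) \<Rightarrow> 'a \<Rightarrow> 'a \<Rightarrow> nat" where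
  "rel adj x y = (if x = y then 0 else if adj x y then 1 else 2)"

definition tuples :: "nat \<Rightarrow> 'a list set" where
  "tuples k = {xs. length xs = k}"

type_synonym ('a) kmat = "'a list \<Rightarrow> 'a list \<Rightarrow> complex"

text \<open>Matrices in C^{V^k x V^k}: functions vanishing outside valid indices.\<close>
definition mats :: "nat \<Rightarrow> 'a kmat set" where
  "mats k = {X. \<forall>x y. (x \<notin> tuples k \<or> y \<notin> tuples k) \<longrightarrow> X x y = 0}"

definition idm :: "nat \<Rightarrow> 'a kmat" where
  "idm k x y = (if x \<in> tuples k \<and> y \<in> tuples k \<and> x = y then 1 else 0)"

definition onesm :: "nat \<Rightarrow> 'a kmat" where
  "onesm k x y = (if x \<in> tuples k \<and> y \<in> tuples k then 1 else 0)"

definition unitm :: "'a list \<Rightarrow> 'a list \<Rightarrow> 'a kmat" where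
  "unitm x y a b = (if a = x \<and> b = y then 1 else 0)"

definition schur :: "'a kmat \<Rightarrow> 'a kmat \<Rightarrow> 'a kmat" where
  "schur A B x y = A x y * B x y"

text \<open>A (k,k)-bilabelled graph: vertex set, edge set (2-element sets), labels u, v.\<close>
type_synonym blgraph = "nat set \<times> nat set set \<times> nat list \<times> nat list"

inductive_set bl_minors :: "blgraph \<Rightarrow> blgraph set" for F :: blgraph where
  base: "F \<in> bl_minors F"
| del_edge: "(V, E, u, v) \<in> bl_minors F \<Longrightarrow> e \<in> E \<Longrightarrow> (V, E - {e}, u, v) \<in> bl_minors F"
| contract: "(V, E, u, v) \<in> bl_minors F \<Longrightarrow> {a, b} \<in> E \<Longrightarrow> a \<noteq> b \<Longrightarrow>
     (V - {b}, (\<lambda>e. (\<lambda>w. if w = b then a else w) ` e) ` (E - {{a, b}}),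
      map (\<lambda>w. if w = b then a else w) u, map (\<lambda>w. if w = b then a else w) v) \<in> bl_minors F"
| del_vertex: "(V, E, u, v) \<in> bl_minors F \<Longrightarrow> w \<in> V \<Longrightarrow> w \<notin> set u \<Longrightarrow> w \<notin> set v \<Longrightarrow>
     (V - {w}, {e \<in> E. w \<notin> e}, u, v) \<in> bl_minors F"

definition Ck :: "nat \<Rightarrow> blgraph" where
  "Ck k = ({1..2*k},
           {{i, i+1} | i. i \<in> {1..2*k} \<and> i \<noteq> k \<and> i \<noteq> 2*k} \<union> {{1, k+1}, {k, 2*k}},
           [1..<k+1], [k+1..<2*k+1])"

definition Mk :: "nat \<Rightarrow> blgraph" where
  "Mk k = ({1..2*k}, {{i, i+k} | i. i \<in> {1..k}}, [1..<k+1], [k+1..<2*k+1])"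

definition QP :: "nat \<Rightarrow> blgraph set" where "QP k = bl_minors (Ck k)"
definition QS :: "nat \<Rightarrow> blgraph set" where "QS k = bl_minors (Mk k)"
definition Q :: "nat \<Rightarrow> blgraph set" where "Q k = QP k \<union> QS k"

definition hom_tensor :: "nat \<Rightarrow> blgraph \<Rightarrow> ('a::finite \<Rightarrow> 'a \<Rightarrow> bool) \<Rightarrow> 'a kmat" where
  "hom_tensor k F adj x y =
    (case F of (V, E, u, v) \<Rightarrow>
      if x \<in> tuples k \<and> y \<in> tuples k then
        of_nat (card {h \<in> V \<rightarrow>\<^sub>E (UNIV :: 'a set).
           (\<forall>a b. {a, b} \<in> E \<longrightarrow> adj (h a) (h b)) \<and>
           (\<forall>i<k. h (u ! i) = x ! i \<and> h (v ! i) = y ! i)})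
      else 0)"

text \<open>Positions 0..2k-1 (0-indexed); X^sigma(w) = X(w o sigma) where w = x @ y.\<close>
definition permm :: "nat \<Rightarrow> (nat \<Rightarrow> nat) \<Rightarrow> 'a kmat \<Rightarrow> 'a kmat" where
  "permm k \<sigma> X x y =
    (if x \<in> tuples k \<and> y \<in> tuples k then
       (let w = x @ y; w' = map (\<lambda>i. w ! (\<sigma> i)) [0..<2*k] in X (take k w') (drop k w'))
     else 0)"

text \<open>The cyclic order 1,...,k,2k,...,k+1 (0-indexed) and its rotations.\<close>
definition cyc_order :: "nat \<Rightarrow> nat list" where
  "cyc_order k = [0..<k] @ rev [k..<2*k]"

text \<open>Index of position i in cyc_order k (for i < 2k).\<close>
definition cyc_pos :: "nat \<Rightarrow> nat \<Rightarrow> nat" where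
  "cyc_pos k i = (if i < k then i else 3*k - 1 - i)"

definition cyc_rot :: "nat \<Rightarrow> nat \<Rightarrow> nat \<Rightarrow> nat" where
  "cyc_rot k m i = (if i < 2*k then cyc_order k ! ((cyc_pos k i + m) mod (2*k)) else i)"

definition cyclic_perms :: "nat \<Rightarrow> (nat \<Rightarrow> nat) set" where
  "cyclic_perms k = {cyc_rot k m | m. True}"

definition psd_on :: "'i set \<Rightarrow> ('i \<Rightarrow> 'i \<Rightarrow> complex) \<Rightarrow> bool" where
  "psd_on S A \<longleftrightarrow> (\<forall>v. let q = (\<Sum>a\<in>S. \<Sum>b\<in>S. cnj (v a) * A a b * v b) in Im q = 0 \<and> Re q \<ge> 0)"

definition linear_kmap :: "nat \<Rightarrow> ('a kmat \<Rightarrow> 'b kmat) \<Rightarrow> bool" where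
  "linear_kmap k \<Phi> \<longleftrightarrow> (\<forall>X \<in> mats k. \<Phi> X \<in> mats k) \<and>
     (\<forall>X \<in> mats k. \<forall>Y \<in> mats k. \<Phi> (\<lambda>x y. X x y + Y x y) = (\<lambda>x y. \<Phi> X x y + \<Phi> Y x y)) \<and>
     (\<forall>X \<in> mats k. \<forall>c. \<Phi> (\<lambda>x y. c * X x y) = (\<lambda>x y. c * \<Phi> X x y))"

text \<open>Phi \<otimes> id_n applied to a block matrix indexed by (V^k x [n]).\<close>
definition ampl :: "nat \<Rightarrow> ('a kmat \<Rightarrow> 'b kmat) \<Rightarrow> ('a list \<times> nat \<Rightarrow> 'a list \<times> nat \<Rightarrow> complex)
     \<Rightarrow> ('b list \<times> nat \<Rightarrow> 'b list \<times> nat \<Rightarrow> complex)" where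
  "ampl k \<Phi> X p q = \<Phi> (\<lambda>x y. if x \<in> tuples k \<and> y \<in> tuples k then X (x, snd p) (y, snd q) else 0) (fst p) (fst q)"

definition completely_positive :: "nat \<Rightarrow> ('a kmat \<Rightarrow> 'b kmat) \<Rightarrow> bool" where
  "completely_positive k \<Phi> \<longleftrightarrow>
     (\<forall>n X. psd_on (tuples k \<times> {..<n}) X \<longrightarrow> psd_on (tuples k \<times> {..<n}) (ampl k \<Phi> X))"

text \<open>Adjoint w.r.t. the Hilbert-Schmidt inner product <A,B> = tr(A^* B).\<close>
definition adjoint_kmap :: "nat \<Rightarrow> ('a::finite kmat \<Rightarrow> 'b::finite kmat) \<Rightarrow> 'b kmat \<Rightarrow> 'a kmat" where
  "adjoint_kmap k \<Phi> Y x y =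
    (if x \<in> tuples k \<and> y \<in> tuples k then
       (\<Sum>a\<in>tuples k. \<Sum>b\<in>tuples k. cnj (\<Phi> (unitm x y) a b) * Y a b)
     else 0)"

definition level_k_qi_map ::
  "nat \<Rightarrow> ('a::finite \<Rightarrow> 'a \<Rightarrow> bool) \<Rightarrow> ('b::finite \<Rightarrow> 'b \<Rightarrow> bool) \<Rightarrow> ('a kmat \<Rightarrow> 'b kmat) \<Rightarrow> bool" where
  "level_k_qi_map k adjG adjH \<Phi> \<longleftrightarrow>
     linear_kmap k \<Phi> \<and>
     completely_positive k \<Phi> \<and>
     (\<forall>F \<in> QP k. \<forall>X \<in> mats k. \<Phi> (schur (hom_tensor k F adjG) X) = schur (hom_tensor k F adjH) (\<Phi> X)) \<and>
     \<Phi> (idm k) = idm k \<and> adjoint_kmap k \<Phi> (idm k) = idm k \<and>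
     \<Phi> (onesm k) = onesm k \<and> adjoint_kmap k \<Phi> (onesm k) = onesm k \<and>
     (\<forall>F \<in> Q k. \<Phi> (hom_tensor k F adjG) = hom_tensor k F adjH) \<and>
     (\<forall>\<sigma> \<in> cyclic_perms k. \<forall>X \<in> mats k. \<Phi> (permm k \<sigma> X) = permm k \<sigma> (\<Phi> X))"

definition choi :: "nat \<Rightarrow> ('a kmat \<Rightarrow> 'b kmat) \<Rightarrow> ('a \<times> 'b) list \<Rightarrow> ('a \<times> 'b) list \<Rightarrow> complex" where
  "choi k \<Phi> s t = \<Phi> (unitm (map fst s) (map fst t)) (map snd s) (map snd t)"

end

theory Submission
  imports Defs
begin

text \<open>Compatibility with Schur products, \<open>\<Phi>(F\<^sub>G \<odot> E\<^sup>x\<^sup>y) = F\<^sub>H \<odot> \<Phi>(E\<^sup>x\<^sup>y)\<close>, forces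
  \<open>\<Phi>(E\<^sup>x\<^sup>y)\<^sub>a\<^sub>b = 0\<close> whenever \<open>F\<^sub>G(x,y) \<noteq> F\<^sub>H(a,b)\<close> for some \<open>F \<in> Q\<^sub>k\<^sup>P\<close>.
  Labelling the vertices of \<open>C\<^sub>k\<close> by the letters of \<open>s\<close> and \<open>t\<close>, the cyclic word \<open>s\<^sup>R t\<close> is read
  off by walking around the cycle, so two cyclically consecutive letters sit at the ends of an
  edge \<open>e\<close> of \<open>C\<^sub>k\<close>. The minor keeping only \<open>e\<close> has a tensor detecting adjacency of the two
  labels, and the minor obtained by contracting \<open>e\<close> one detecting their equality; if
  \<open>rel\<^sub>G(g,g') \<noteq> rel\<^sub>H(h,h')\<close>, one of the two separates the \<open>G\<close>-labels from the \<open>H\<close>-labels.\<close>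

definition Ck_edges :: "nat \<Rightarrow> nat set set" where
  "Ck_edges k = {{i, i+1} | i. i \<in> {1..2*k} \<and> i \<noteq> k \<and> i \<noteq> 2*k} \<union> {{1, k+1}, {k, 2*k}}"

lemma Ck_eq: "Ck k = ({1..2*k}, Ck_edges k, [1..<k+1], [k+1..<2*k+1])"
  unfolding Ck_def Ck_edges_def by simp

lemma finite_Ck_edges: "finite (Ck_edges k)"
proof (rule finite_subset)
  show "Ck_edges k \<subseteq> Pow {0..2*k+1}" unfolding Ck_edges_def by auto
qed simp

lemma bl_minors_Diff_edges:
  assumes "(V, E, u, v) \<in> bl_minors F" "finite D" "D \<subseteq> E"
  shows "(V, E - D, u, v) \<in> bl_minors F"
  using assms(2,3)
proof (induction D rule: finite_induct)
  case empty
  then show ?case using assms(1) by simp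
next
  case (insert d D)
  then have "(V, (E - D) - {d}, u, v) \<in> bl_minors F"
    by (intro bl_minors.del_edge) auto
  moreover have "(E - D) - {d} = E - insert d D" by auto
  ultimately show ?case by simp
qed

lemma Ck_single_edge_in_QP:
  assumes "e \<in> Ck_edges k"
  shows "({1..2*k}, {e}, [1..<k+1], [k+1..<2*k+1]) \<in> QP k"
proof -
  have "({1..2*k}, Ck_edges k - (Ck_edges k - {e}), [1..<k+1], [k+1..<2*k+1]) \<in> bl_minors (Ck k)"
    by (rule bl_minors_Diff_edges) (auto simp: Ck_eq intro: bl_minors.base finite_Ck_edges)
  moreover have "Ck_edges k - (Ck_edges k - {e}) = {e}" using assms by auto
  ultimately show ?thesis unfolding QP_def by simp
qed

lemma Ck_contracted_edge_in_QP:
  assumes "{a, b} \<in> Ck_edges k" "a \<noteq> b"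
  shows "({1..2*k} - {b}, {}, map (\<lambda>w. if w = b then a else w) [1..<k+1],
      map (\<lambda>w. if w = b then a else w) [k+1..<2*k+1]) \<in> QP k"
proof -
  have "({1..2*k} - {b}, (\<lambda>e. (\<lambda>w. if w = b then a else w) ` e) ` ({{a, b}} - {{a, b}}),
      map (\<lambda>w. if w = b then a else w) [1..<k+1], map (\<lambda>w. if w = b then a else w) [k+1..<2*k+1])
      \<in> bl_minors (Ck k)"
    using Ck_single_edge_in_QP[OF assms(1)] assms(2) unfolding QP_def
    by (intro bl_minors.contract) auto
  then show ?thesis unfolding QP_def by simp
qed

lemma standard_labels_iff:
  assumes "length x = k" "length y = k"
  shows "(\<forall>i<k. \<phi> ([1..<k+1] ! i) = x ! i \<and> \<phi> ([k+1..<2*k+1] ! i) = y ! i) \<longleftrightarrow>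
         (\<forall>p\<in>{1..2*k}. \<phi> p = (x @ y) ! (p - 1))"
proof
  assume labels: "\<forall>i<k. \<phi> ([1..<k+1] ! i) = x ! i \<and> \<phi> ([k+1..<2*k+1] ! i) = y ! i"
  show "\<forall>p\<in>{1..2*k}. \<phi> p = (x @ y) ! (p - 1)"
  proof
    fix p assume p: "p \<in> {1..2*k}"
    show "\<phi> p = (x @ y) ! (p - 1)"
    proof (cases "p \<le> k")
      case True
      then show ?thesis
        using labels[rule_format, of "p - 1"] p assms by (auto simp: nth_append simp del: upt_Suc)
    next
      case False
      then show ?thesis
        using labels[rule_format, of "p - k - 1"] p assms by (auto simp: nth_append simp del: upt_Suc)
    qed
  qed
next
  assume "\<forall>p\<in>{1..2*k}. \<phi> p = (x @ y) ! (p - 1)"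
  then show "\<forall>i<k. \<phi> ([1..<k+1] ! i) = x ! i \<and> \<phi> ([k+1..<2*k+1] ! i) = y ! i"
    using assms by (auto simp: nth_append simp del: upt_Suc)
qed

lemma card_PiE_determined:
  "card {h \<in> V \<rightarrow>\<^sub>E (UNIV :: 'a set). (\<forall>p\<in>V. h p = f p) \<and> P h} =
     (if P (restrict f V) then 1 else 0)"
proof -
  have "h \<in> V \<rightarrow>\<^sub>E UNIV \<and> (\<forall>p\<in>V. h p = f p) \<longleftrightarrow> h = restrict f V" for h :: "_ \<Rightarrow> 'a"
    by (auto simp: PiE_iff extensional_def fun_eq_iff)
  then have "{h \<in> V \<rightarrow>\<^sub>E (UNIV :: 'a set). (\<forall>p\<in>V. h p = f p) \<and> P h} =
      {h. h = restrict f V \<and> P h}"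
    by blast
  also have "\<dots> = (if P (restrict f V) then {restrict f V} else {})"
    by auto
  finally show ?thesis by simp
qed

lemma hom_tensor_fully_labelled:
  fixes adj :: "'a::finite \<Rightarrow> 'a \<Rightarrow> bool"
  assumes "length x = k" "length y = k" and edges: "\<Union>E \<subseteq> {1..2*k}"
  shows "hom_tensor k ({1..2*k}, E, [1..<k+1], [k+1..<2*k+1]) adj x y =
    (if \<forall>a b. {a, b} \<in> E \<longrightarrow> adj ((x @ y) ! (a - 1)) ((x @ y) ! (b - 1)) then 1 else 0)"
proof -
  let ?V = "{1..2*k}" and ?lab = "\<lambda>p. (x @ y) ! (p - 1)"
  let ?hom = "\<lambda>h. \<forall>a b. {a, b} \<in> E \<longrightarrow> adj (h a) (h b)"
  have "{h \<in> ?V \<rightarrow>\<^sub>E UNIV. ?hom h \<and>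
        (\<forall>i<k. h ([1..<k+1] ! i) = x ! i \<and> h ([k+1..<2*k+1] ! i) = y ! i)} =
      {h \<in> ?V \<rightarrow>\<^sub>E UNIV. (\<forall>p\<in>?V. h p = ?lab p) \<and> ?hom h}"
    using standard_labels_iff[OF assms(1,2)] by blast
  moreover have "?hom (restrict ?lab ?V) \<longleftrightarrow> ?hom ?lab"
  proof -
    have "restrict ?lab ?V a = ?lab a \<and> restrict ?lab ?V b = ?lab b" if "{a, b} \<in> E" for a b
      using edges that by auto
    then show ?thesis by (intro iff_allI) simp
  qed
  ultimately show ?thesis
    using assms unfolding hom_tensor_def
    by (simp add: tuples_def card_PiE_determined del: upt_Suc)
qed


lemma hom_tensor_single_edge:
  fixes adj :: "'a::finite \<Rightarrow> 'a \<Rightarrow> bool"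
  assumes "simple_graph adj" "length x = k" "length y = k" "a \<in> {1..2*k}" "b \<in> {1..2*k}"
  shows "hom_tensor k ({1..2*k}, {{a, b}}, [1..<k+1], [k+1..<2*k+1]) adj x y =
    (if adj ((x @ y) ! (a - 1)) ((x @ y) ! (b - 1)) then 1 else 0)"
  using assms hom_tensor_fully_labelled[of x k y "{{a, b}}" adj]
  by (auto simp: simple_graph_def doubleton_eq_iff)

lemma hom_tensor_contracted:
  fixes adj :: "'a::finite \<Rightarrow> 'a \<Rightarrow> bool"
  assumes "length x = k" "length y = k" and ab: "a \<in> {1..2*k}" "b \<in> {1..2*k}" "a \<noteq> b"
  shows "hom_tensor k ({1..2*k} - {b}, {}, map (\<lambda>w. if w = b then a else w) [1..<k+1],
      map (\<lambda>w. if w = b then a else w) [k+1..<2*k+1]) adj x y =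
    (if (x @ y) ! (a - 1) = (x @ y) ! (b - 1) then 1 else 0)"
proof -
  let ?V = "{1..2*k} - {b}" and ?lab = "\<lambda>p. (x @ y) ! (p - 1)"
    and ?r = "\<lambda>w. if w = b then a else w"
  have labels_iff: "(\<forall>i<k. h (map ?r [1..<k+1] ! i) = x ! i \<and> h (map ?r [k+1..<2*k+1] ! i) = y ! i)
      \<longleftrightarrow> (\<forall>p\<in>{1..2*k}. h (?r p) = ?lab p)" for h :: "nat \<Rightarrow> 'a"
  proof -
    have map_nth: "map ?r [1..<k+1] ! i = ?r ([1..<k+1] ! i)"
      "map ?r [k+1..<2*k+1] ! i = ?r ([k+1..<2*k+1] ! i)" if "i < k" for i
      using that by (simp_all del: upt_Suc)
    then show ?thesis
      using standard_labels_iff[OF assms(1,2), of "h \<circ> ?r"]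
      by (simp only: comp_def map_nth cong: imp_cong)
  qed
  have contract_iff: "(\<forall>p\<in>{1..2*k}. h (?r p) = ?lab p) \<longleftrightarrow> (\<forall>p\<in>?V. h p = ?lab p) \<and> ?lab a = ?lab b"
    for h :: "nat \<Rightarrow> 'a"
  proof
    assume agree: "\<forall>p\<in>{1..2*k}. h (?r p) = ?lab p"
    have "\<forall>p\<in>?V. h p = ?lab p"
      using agree by (metis DiffE singletonI)
    moreover have "h a = ?lab a" "h a = ?lab b"
      using agree[rule_format, of a] agree[rule_format, of b] ab by auto
    ultimately show "(\<forall>p\<in>?V. h p = ?lab p) \<and> ?lab a = ?lab b" by simp
  next
    assume "(\<forall>p\<in>?V. h p = ?lab p) \<and> ?lab a = ?lab b"
    then show "\<forall>p\<in>{1..2*k}. h (?r p) = ?lab p" using ab by auto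
  qed
  have "{h \<in> ?V \<rightarrow>\<^sub>E UNIV. (\<forall>a b. {a, b} \<in> {} \<longrightarrow> adj (h a) (h b)) \<and>
        (\<forall>i<k. h (map ?r [1..<k+1] ! i) = x ! i \<and> h (map ?r [k+1..<2*k+1] ! i) = y ! i)} =
      {h \<in> ?V \<rightarrow>\<^sub>E UNIV. (\<forall>p\<in>?V. h p = ?lab p) \<and> ?lab a = ?lab b}"
    unfolding labels_iff contract_iff by blast
  then show ?thesis
    using assms unfolding hom_tensor_def
    by (simp add: tuples_def card_PiE_determined del: upt_Suc)
qed

lemma level_k_qi_map_unit_entry_zero:
  assumes qi: "level_k_qi_map k adjG adjH \<Phi>" and F: "F \<in> QP k"
    and xy: "x \<in> tuples k" "y \<in> tuples k"
    and differ: "hom_tensor k F adjG x y \<noteq> hom_tensor k F adjH a b"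
  shows "\<Phi> (unitm x y) a b = 0"
proof -
  let ?c = "hom_tensor k F adjG x y"
  have unit: "unitm x y \<in> mats k" using xy by (auto simp: mats_def unitm_def)
  have "schur (hom_tensor k F adjG) (unitm x y) = (\<lambda>p q. ?c * unitm x y p q)"
    by (auto simp: schur_def unitm_def fun_eq_iff)
  then have "\<Phi> (schur (hom_tensor k F adjG) (unitm x y)) = (\<lambda>p q. ?c * \<Phi> (unitm x y) p q)"
    using qi unit by (simp add: level_k_qi_map_def linear_kmap_def)
  moreover have "\<Phi> (schur (hom_tensor k F adjG) (unitm x y)) = schur (hom_tensor k F adjH) (\<Phi> (unitm x y))"
    using qi F unit by (simp add: level_k_qi_map_def)
  ultimately have "?c * \<Phi> (unitm x y) a b = hom_tensor k F adjH a b * \<Phi> (unitm x y) a b"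
    by (metis schur_def)
  then show ?thesis using differ by simp
qed

lemma level_k_qi_map_unit_entry_zero_at_Ck_edge:
  assumes "simple_graph adjG" "simple_graph adjH" and qi: "level_k_qi_map k adjG adjH \<Phi>"
    and edge: "{a, b} \<in> Ck_edges k" "a \<noteq> b" "a \<in> {1..2*k}" "b \<in> {1..2*k}"
    and lengths: "length x = k" "length y = k" "length x' = k" "length y' = k"
    and rel_differs: "rel adjG ((x @ y) ! (a - 1)) ((x @ y) ! (b - 1)) \<noteq>
      rel adjH ((x' @ y') ! (a - 1)) ((x' @ y') ! (b - 1))"
  shows "\<Phi> (unitm x y) x' y' = 0"
proof -
  have tuples: "x \<in> tuples k" "y \<in> tuples k" using lengths by (auto simp: tuples_def)
  let ?g = "(x @ y) ! (a - 1)" and ?g' = "(x @ y) ! (b - 1)"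
    and ?h = "(x' @ y') ! (a - 1)" and ?h' = "(x' @ y') ! (b - 1)"
  consider "(?g = ?g') \<noteq> (?h = ?h')" | "?g \<noteq> ?g'" "?h \<noteq> ?h'" "adjG ?g ?g' \<noteq> adjH ?h ?h'"
    using rel_differs by (auto simp: rel_def split: if_splits)
  then show ?thesis
  proof cases
    case 1
    then show ?thesis
      using level_k_qi_map_unit_entry_zero[OF qi Ck_contracted_edge_in_QP[OF edge(1,2)] tuples]
        hom_tensor_contracted[OF lengths(1,2) edge(3,4,2), of adjG]
        hom_tensor_contracted[OF lengths(3,4) edge(3,4,2), of adjH]
      by simp
  next
    case 2
    then show ?thesis
      using level_k_qi_map_unit_entry_zero[OF qi Ck_single_edge_in_QP[OF edge(1)] tuples]
        hom_tensor_single_edge[OF assms(1) lengths(1,2) edge(3,4)]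
        hom_tensor_single_edge[OF assms(2) lengths(3,4) edge(3,4)]
      by simp
  qed
qed

text \<open>The vertex of \<open>C\<^sub>k\<close> carrying the \<open>j\<close>-th letter (from 0) of \<open>rev s @ t\<close>.
  As \<open>j\<close> runs through \<open>0..<2*k\<close> it walks around the cycle \<open>k, \<dots>, 1, k+1, \<dots>, 2*k\<close>.\<close>

definition cycle_vertex :: "nat \<Rightarrow> nat \<Rightarrow> nat" where
  "cycle_vertex k j = (if j < k then k - j else j + 1)"

lemma rev_append_nth_cycle_vertex:
  assumes "length s = k" "length t = k" "j < 2*k"
  shows "(rev s @ t) ! j = (s @ t) ! (cycle_vertex k j - 1)"
  using assms by (auto simp: cycle_vertex_def nth_append rev_nth)

lemma cycle_vertex_Ck_edge:
  assumes j: "j < 2*k"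
  defines "a \<equiv> cycle_vertex k j" and "b \<equiv> cycle_vertex k (Suc j mod (2*k))"
  shows "{a, b} \<in> Ck_edges k \<and> a \<noteq> b \<and> a \<in> {1..2*k} \<and> b \<in> {1..2*k}"
proof -
  consider "Suc j < k" | "Suc j = k" | "k \<le> j" "Suc j < 2*k" | "Suc j = 2*k"
    using j by linarith
  then show ?thesis
  proof cases
    case 1
    then have "a = (k - Suc j) + 1" "b = k - Suc j" by (auto simp: a_def b_def cycle_vertex_def)
    moreover have "{k - Suc j, (k - Suc j) + 1} \<in> Ck_edges k"
      unfolding Ck_edges_def using 1 by (intro UnI1 CollectI exI[of _ "k - Suc j"]) auto
    ultimately show ?thesis using 1 by (auto simp: insert_commute)
  next
    case 2
    then show ?thesis by (auto simp: a_def b_def cycle_vertex_def Ck_edges_def)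
  next
    case 3
    then have "a = j + 1" "b = (j + 1) + 1" by (auto simp: a_def b_def cycle_vertex_def)
    moreover have "{j + 1, (j + 1) + 1} \<in> Ck_edges k"
      unfolding Ck_edges_def using 3 by (intro UnI1 CollectI exI[of _ "j + 1"]) auto
    ultimately show ?thesis using 3 by auto
  next
    case 4
    then show ?thesis by (auto simp: a_def b_def cycle_vertex_def Ck_edges_def insert_commute)
  qed
qed

lemma rotate_rev_append_consecutive:
  assumes "length s = k" "length t = k" and i: "Suc i < length (rotate m (rev s @ t))"
  obtains a b where "{a, b} \<in> Ck_edges k" "a \<noteq> b" "a \<in> {1..2*k}" "b \<in> {1..2*k}"
    "rotate m (rev s @ t) ! i = (s @ t) ! (a - 1)"
    "rotate m (rev s @ t) ! Suc i = (s @ t) ! (b - 1)"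
proof -
  define j where "j = (m + i) mod (2*k)"
  have len: "length (rev s @ t) = 2*k" using assms by simp
  then have j: "j < 2*k" using i by (simp add: j_def)
  have "rotate m (rev s @ t) ! i = (rev s @ t) ! j"
    "rotate m (rev s @ t) ! Suc i = (rev s @ t) ! (Suc j mod (2*k))"
    using i len by (simp_all add: nth_rotate j_def mod_Suc_eq)
  then show ?thesis
    using cycle_vertex_Ck_edge[OF j] rev_append_nth_cycle_vertex[OF assms(1,2)] j
    by (intro that[of "cycle_vertex k j" "cycle_vertex k (Suc j mod (2*k))"]) auto
qed

theorem lemma3p4:
  fixes adjG :: "'a::finite \<Rightarrow> 'a \<Rightarrow> bool" and adjH :: "'b::finite \<Rightarrow> 'b \<Rightarrow> bool"
    and k :: nat and \<Phi> :: "'a kmat \<Rightarrow> 'b kmat"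
    and s t :: "('a \<times> 'b) list"
  assumes "simple_graph adjG" and "simple_graph adjH"
    and "level_k_qi_map k adjG adjH \<Phi>"
    and "length s = k" and "length t = k"
    and "\<exists>m i. let w = rotate m (rev s @ t) in
           Suc i < length w \<and>
           rel adjG (fst (w ! i)) (fst (w ! Suc i)) \<noteq> rel adjH (snd (w ! i)) (snd (w ! Suc i))"
  shows "choi k \<Phi> s t = 0"
proof -
  obtain m i where i: "Suc i < length (rotate m (rev s @ t))"
    and rel_differs: "rel adjG (fst (rotate m (rev s @ t) ! i)) (fst (rotate m (rev s @ t) ! Suc i)) \<noteq>
      rel adjH (snd (rotate m (rev s @ t) ! i)) (snd (rotate m (rev s @ t) ! Suc i))"
    using assms(6) by (auto simp: Let_def)
  obtain a b where edge: "{a, b} \<in> Ck_edges k" "a \<noteq> b" "a \<in> {1..2*k}" "b \<in> {1..2*k}"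
    and letters: "rotate m (rev s @ t) ! i = (s @ t) ! (a - 1)"
      "rotate m (rev s @ t) ! Suc i = (s @ t) ! (b - 1)"
    using rotate_rev_append_consecutive[OF assms(4,5) i] by blast
  have "f ((s @ t) ! (p - 1)) = (map f s @ map f t) ! (p - 1)"
    if "p \<in> {1..2*k}" for f :: "'a \<times> 'b \<Rightarrow> 'c" and p
    using that assms(4,5) by (auto simp: nth_append)
  then have "rel adjG ((map fst s @ map fst t) ! (a - 1)) ((map fst s @ map fst t) ! (b - 1)) \<noteq>
      rel adjH ((map snd s @ map snd t) ! (a - 1)) ((map snd s @ map snd t) ! (b - 1))"
    using rel_differs edge(3,4) unfolding letters by metis
  then show ?thesis
    unfolding choi_def using assms(4,5)
    by (intro level_k_qi_map_unit_entry_zero_at_Ck_edge[OF assms(1-3) edge]) auto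
qed

end
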